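(* For every connected graph $H$ with at least two vertices, $m(H)\ge 2^{\lfloor k'(H)/2\rfloor}$, where $k'(H)$ is the edge connectivity of $H$.
   Context: All graphs are finite and simple. The edge connectivity $k'(H)$ is the minimum number of edges whose removal disconnects $H$. For graphs $G_1=(V,E_1)$, $G_2=(V,E_2)$, their symmetric difference is $(V,E_1\oplus E_2)$, where $E_1\oplus E_2$ is the set of edges in exactly one of $E_1,E_2$. A connectivity code for $H=(V,E)$ is a collection of distinct spanning subgraphs $(V,E')$, $E'\subseteq E$, such that the symmetric difference of any two distinct members is a connected graph on $V$; $m(H)$ is the maximum cardinality of a connectivity code for $H$. *)

theory Defs
  imports Main
begin

definition simple_graph :: "'a set \<Rightarrow> 'a set set \<Rightarrow> bool" where
  "simple_graph V E \<longleftrightarrow> finite V \<and> (\<forall>e\<in>E. e \<subseteq> V \<and> card e = 2)"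

definition adj :: "'a set set \<Rightarrow> ('a \<times> 'a) set" where
  "adj E = {(u, v). {u, v} \<in> E}"

definition connected_graph :: "'a set \<Rightarrow> 'a set set \<Rightarrow> bool" where
  "connected_graph V E \<longleftrightarrow> V \<noteq> {} \<and> (\<forall>u\<in>V. \<forall>v\<in>V. (u, v) \<in> (adj E)\<^sup>*)"

definition edge_connectivity :: "'a set \<Rightarrow> 'a set set \<Rightarrow> nat" where
  "edge_connectivity V E =
     (LEAST k. \<exists>S. S \<subseteq> E \<and> card S = k \<and> \<not> connected_graph V (E - S))"

definition sym_diff :: "'b set \<Rightarrow> 'b set \<Rightarrow> 'b set" where
  "sym_diff A B = (A - B) \<union> (B - A)"

text \<open>A connectivity code: a collection of distinct spanning subgraphs (V, E'), E' \<subseteq> E,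
  each represented by its edge set, with pairwise connected symmetric differences.\<close>
definition connectivity_code :: "'a set \<Rightarrow> 'a set set \<Rightarrow> 'a set set set \<Rightarrow> bool" where
  "connectivity_code V E C \<longleftrightarrow>
     (\<forall>F\<in>C. F \<subseteq> E) \<and>
     (\<forall>F1\<in>C. \<forall>F2\<in>C. F1 \<noteq> F2 \<longrightarrow> connected_graph V (sym_diff F1 F2))"

definition max_code :: "'a set \<Rightarrow> 'a set set \<Rightarrow> nat" where
  "max_code V E = Max {card C | C. connectivity_code V E C}"

end

theory Submission
  imports Defs
begin

text \<open>By the Nash-Williams--Tutte theorem a graph with k' \<ge> 2k has k edge-disjoint
  spanning trees T_0, ..., T_{k-1}: every partition of the vertices into r classes is crossed by at
  least r k'/2 \<ge> k (r - 1) edges. The unions of the 2^k subfamilies of these trees are distinct,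
  and the symmetric difference of two of them contains a whole tree, so it is connected.

  The tree-packing theorem is proved for multigraphs, where an edge is an element of an abstract
  type with endpoint maps s and t, so that contracting a vertex set is just composing s and t with
  a map on vertices. Take k edge-disjoint forests of maximum total size. If one of them does not
  span, exchanging edges between the forests and the unused edges reveals a set U of at least two
  vertices spanned inside by every forest; contract U, pack the contracted multigraph by induction,
  and add back the forest edges inside U.\<close>

section \<open>Connectivity in multigraphs\<close>

definition link_rel :: "('e \<Rightarrow> 'v) \<Rightarrow> ('e \<Rightarrow> 'v) \<Rightarrow> 'e set \<Rightarrow> ('v \<times> 'v) set" where
  "link_rel s t A = {(s e, t e) | e. e \<in> A} \<union> {(t e, s e) | e. e \<in> A}"

definition linked :: "('e \<Rightarrow> 'v) \<Rightarrow> ('e \<Rightarrow> 'v) \<Rightarrow> 'e set \<Rightarrow> 'v \<Rightarrow> 'v \<Rightarrow> bool" where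
  "linked s t A x y \<longleftrightarrow> (x, y) \<in> (link_rel s t A)\<^sup>*"

lemma linked_refl [simp]: "linked s t A x x"
  by (simp add: linked_def)

lemma linked_trans: "linked s t A x y \<Longrightarrow> linked s t A y z \<Longrightarrow> linked s t A x z"
  unfolding linked_def by (rule rtrancl_trans)

lemma link_rel_cases:
  assumes "(y, z) \<in> link_rel s t A"
  obtains e where "e \<in> A" "y = s e" "z = t e" | e where "e \<in> A" "y = t e" "z = s e"
  using assms unfolding link_rel_def by blast

lemma linked_sym: "linked s t A x y \<Longrightarrow> linked s t A y x"
  unfolding linked_def
proof (induction rule: rtrancl_induct)
  case (step y z)
  have "(z, y) \<in> link_rel s t A" using step(2) unfolding link_rel_def by blast
  thus ?case using step(3) by (rule converse_rtrancl_into_rtrancl)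
qed simp

lemma linked_edge: "e \<in> A \<Longrightarrow> linked s t A (s e) (t e)"
  unfolding linked_def link_rel_def by blast

lemma linked_edge_rev: "e \<in> A \<Longrightarrow> linked s t A (t e) (s e)"
  using linked_edge linked_sym by metis

lemma linked_mono: "linked s t A x y \<Longrightarrow> A \<subseteq> B \<Longrightarrow> linked s t B x y"
proof -
  assume "A \<subseteq> B"
  hence "link_rel s t A \<subseteq> link_rel s t B" unfolding link_rel_def by blast
  thus "linked s t A x y \<Longrightarrow> linked s t B x y" unfolding linked_def using rtrancl_mono by blast
qed

lemma linked_empty_iff: "linked s t {} x y \<longleftrightarrow> x = y"
  unfolding linked_def link_rel_def by simp

lemma linked_via_linked_edges:
  assumes "linked s t A x y" and "\<And>e. e \<in> A \<Longrightarrow> linked s' t' B (s e) (t e)"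
  shows "linked s' t' B x y"
  using assms(1) unfolding linked_def[of s t]
proof (induction rule: rtrancl_induct)
  case (step y z)
  from step(2) have "linked s' t' B y z"
    by (rule link_rel_cases) (use assms(2) linked_sym in metis)+
  thus ?case using step(3) linked_trans by metis
qed simp

lemma linked_insert_iff:
  "linked s t (insert e A) x y \<longleftrightarrow> linked s t A x y \<or>
     (linked s t A x (s e) \<and> linked s t A (t e) y) \<or> (linked s t A x (t e) \<and> linked s t A (s e) y)"
proof
  assume "linked s t (insert e A) x y"
  thus "linked s t A x y \<or> (linked s t A x (s e) \<and> linked s t A (t e) y)
     \<or> (linked s t A x (t e) \<and> linked s t A (s e) y)"
    unfolding linked_def[of s t "insert e A"]
  proof (induction rule: rtrancl_induct)
    case (step y z)
    from step(2) have "linked s t A y z \<or> (y = s e \<and> z = t e) \<or> (y = t e \<and> z = s e)"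
      by (rule link_rel_cases) (auto intro: linked_edge linked_edge_rev)
    thus ?case using step(3) by (meson linked_trans linked_refl)
  qed simp
next
  have "\<And>a b. linked s t A a b \<Longrightarrow> linked s t (insert e A) a b"
    by (erule linked_mono) blast
  moreover have "linked s t (insert e A) (s e) (t e)" by (rule linked_edge) simp
  ultimately show "linked s t A x y \<or> (linked s t A x (s e) \<and> linked s t A (t e) y)
     \<or> (linked s t A x (t e) \<and> linked s t A (s e) y) \<Longrightarrow> linked s t (insert e A) x y"
    by (meson linked_trans linked_sym)
qed

lemma linked_insert_redundant:
  assumes "linked s t A (s e) (t e)"
  shows "linked s t (insert e A) x y \<longleftrightarrow> linked s t A x y"
  using assms by (simp add: linked_insert_iff) (meson linked_trans linked_sym)

lemma linked_within_closed_set: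
  assumes "linked s t A x y" "x \<in> W" "\<And>e. e \<in> A \<Longrightarrow> s e \<in> W \<longleftrightarrow> t e \<in> W"
  shows "linked s t {e \<in> A. s e \<in> W \<and> t e \<in> W} x y \<and> y \<in> W"
  using assms(1) unfolding linked_def[of s t A]
proof (induction rule: rtrancl_induct)
  case base thus ?case using assms(2) by simp
next
  case (step y z)
  let ?A = "{e \<in> A. s e \<in> W \<and> t e \<in> W}"
  from step(2) show ?case
  proof (rule link_rel_cases)
    fix e assume "e \<in> A" "y = s e" "z = t e"
    thus ?thesis using step(3) assms(3)[of e] linked_edge[of e ?A s t] by (auto intro: linked_trans)
  next
    fix e assume "e \<in> A" "y = t e" "z = s e"
    thus ?thesis using step(3) assms(3)[of e] linked_edge_rev[of e ?A s t] by (auto intro: linked_trans)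
  qed
qed

section \<open>Forests and their components\<close>

definition forest :: "('e \<Rightarrow> 'v) \<Rightarrow> ('e \<Rightarrow> 'v) \<Rightarrow> 'e set \<Rightarrow> bool" where
  "forest s t F \<longleftrightarrow> (\<forall>e\<in>F. \<not> linked s t (F - {e}) (s e) (t e))"

lemma forest_subset: "forest s t F \<Longrightarrow> G \<subseteq> F \<Longrightarrow> forest s t G"
  unfolding forest_def by (meson Diff_mono linked_mono order_refl subsetD)

lemma forest_insert:
  assumes "forest s t F" "\<not> linked s t F (s e) (t e)"
  shows "forest s t (insert e F)"
  unfolding forest_def
proof
  fix e' assume e': "e' \<in> insert e F"
  show "\<not> linked s t (insert e F - {e'}) (s e') (t e')"
  proof (cases "e' = e")
    case True
    thus ?thesis using assms(2) linked_mono[of s t "insert e F - {e'}" _ _ F] by blast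
  next
    case False
    hence e'F: "e' \<in> F" using e' by blast
    have eq: "insert e F - {e'} = insert e (F - {e'})" using False by blast
    have nc: "\<not> linked s t (F - {e'}) (s e') (t e')" using assms(1) e'F unfolding forest_def by blast
    have m: "\<And>a b. linked s t (F - {e'}) a b \<Longrightarrow> linked s t F a b" by (erule linked_mono) blast
    have ed: "linked s t F (s e') (t e')" using e'F by (rule linked_edge)
    show ?thesis
    proof
      assume "linked s t (insert e F - {e'}) (s e') (t e')"
      hence "linked s t (F - {e'}) (s e') (s e) \<and> linked s t (F - {e'}) (t e) (t e')
           \<or> linked s t (F - {e'}) (s e') (t e) \<and> linked s t (F - {e'}) (s e) (t e')"
        using nc unfolding eq linked_insert_iff by blast
      hence "linked s t F (s e) (t e)" using m ed by (meson linked_sym linked_trans)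
      thus False using assms(2) by blast
    qed
  qed
qed

lemma forest_exchange:
  assumes "forest s t F" "\<not> linked s t (F - {e'}) (s e) (t e)"
  shows "forest s t (insert e F - {e'})"
proof -
  have "forest s t (insert e (F - {e'}))"
    using assms by (intro forest_insert forest_subset[OF assms(1)]) auto
  thus ?thesis by (rule forest_subset) blast
qed

lemma forest_linked_by_bridges:
  assumes "forest s t F" "finite A" "A \<subseteq> F" "linked s t A x y"
  shows "linked s t {e \<in> A. \<not> linked s t (F - {e}) x y} x y"
  using assms(2-4)
proof (induction "card A" arbitrary: A rule: less_induct)
  case less
  show ?case
  proof (cases "\<forall>e\<in>A. \<not> linked s t (F - {e}) x y")
    case True
    hence "{e \<in> A. \<not> linked s t (F - {e}) x y} = A" by blast
    thus ?thesis using less by simp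
  next
    case False
    then obtain e where e: "e \<in> A" "linked s t (F - {e}) x y" by blast
    have "linked s t (A - {e}) x y"
    proof (rule ccontr)
      assume nc: "\<not> linked s t (A - {e}) x y"
      have "linked s t (insert e (A - {e})) x y" using less(4) e(1) by (simp add: insert_absorb)
      hence c: "linked s t (A - {e}) x (s e) \<and> linked s t (A - {e}) (t e) y
           \<or> linked s t (A - {e}) x (t e) \<and> linked s t (A - {e}) (s e) y"
        using nc unfolding linked_insert_iff by blast
      have m: "\<And>a b. linked s t (A - {e}) a b \<Longrightarrow> linked s t (F - {e}) a b"
        by (erule linked_mono) (use less(3) in blast)
      have "linked s t (F - {e}) (s e) (t e)" using c m e(2) by (meson linked_sym linked_trans)
      thus False using assms(1) e(1) less(3) unfolding forest_def by blast
    qed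
    hence "linked s t {e' \<in> A - {e}. \<not> linked s t (F - {e'}) x y} x y"
      using less(2,3) e(1) by (intro less(1) card_Diff1_less[OF less(2) e(1)]) auto
    thus ?thesis by (rule linked_mono) blast
  qed
qed

definition component :: "('e \<Rightarrow> 'v) \<Rightarrow> ('e \<Rightarrow> 'v) \<Rightarrow> 'v set \<Rightarrow> 'e set \<Rightarrow> 'v \<Rightarrow> 'v set" where
  "component s t V F v = {w \<in> V. linked s t F v w}"

lemma component_eq_iff:
  assumes "w \<in> V"
  shows "component s t V F v = component s t V F w \<longleftrightarrow> linked s t F v w"
proof
  assume "component s t V F v = component s t V F w"
  moreover have "w \<in> component s t V F w" using assms by (simp add: component_def)
  ultimately have "w \<in> component s t V F v" by simp
  thus "linked s t F v w" by (simp add: component_def)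
qed (auto simp: component_def intro: linked_trans linked_sym)

lemma component_insert:
  assumes "\<not> linked s t F (s e) (t e)"
  shows "component s t V (insert e F) v =
    (if linked s t F v (s e) \<or> linked s t F v (t e)
     then component s t V F (s e) \<union> component s t V F (t e) else component s t V F v)"
proof -
  have shift: "linked s t F v w \<longleftrightarrow> linked s t F u w" if "linked s t F v u" for u w
    using that linked_trans linked_sym by metis
  have excl: "linked s t F v (s e) \<longleftrightarrow> \<not> linked s t F v (t e)"
    if "linked s t F v (s e) \<or> linked s t F v (t e)"
    using that assms linked_trans linked_sym by metis
  show ?thesis
  proof (cases "linked s t F v (s e)")
    case True
    thus ?thesis unfolding component_def linked_insert_iff using shift[OF True] excl by auto
  next
    case False
    show ?thesis
    proof (cases "linked s t F v (t e)")
      case True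
      thus ?thesis unfolding component_def linked_insert_iff using shift[OF True] False by auto
    qed (use False in \<open>simp add: component_def linked_insert_iff\<close>)
  qed
qed

lemma components_insert:
  assumes "s e \<in> V" "t e \<in> V" "\<not> linked s t F (s e) (t e)"
  defines "A \<equiv> component s t V F (s e)" and "B \<equiv> component s t V F (t e)"
  shows "component s t V (insert e F) ` V = insert (A \<union> B) (component s t V F ` V - {A, B})"
proof (rule set_eqI, rule iffI)
  have not_AB: "component s t V F v \<noteq> A \<and> component s t V F v \<noteq> B
      \<longleftrightarrow> \<not> linked s t F v (s e) \<and> \<not> linked s t F v (t e)" for v
    unfolding A_def B_def by (simp add: component_eq_iff[OF assms(1)] component_eq_iff[OF assms(2)])
  {
    fix X assume "X \<in> component s t V (insert e F) ` V"
    then obtain v where v: "v \<in> V" "X = component s t V (insert e F) v" by blast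
    show "X \<in> insert (A \<union> B) (component s t V F ` V - {A, B})"
    proof (cases "linked s t F v (s e) \<or> linked s t F v (t e)")
      case True
      thus ?thesis using v(2) component_insert[OF assms(3)] unfolding A_def B_def by simp
    next
      case False
      hence "X = component s t V F v" using v(2) component_insert[OF assms(3)] by simp
      moreover have "component s t V F v \<notin> {A, B}" using False not_AB by blast
      ultimately show ?thesis using v(1) by blast
    qed
  next
    fix X assume X: "X \<in> insert (A \<union> B) (component s t V F ` V - {A, B})"
    show "X \<in> component s t V (insert e F) ` V"
    proof (cases "X = A \<union> B")
      case True
      hence "X = component s t V (insert e F) (s e)"
        using component_insert[OF assms(3)] unfolding A_def B_def by simp
      thus ?thesis using assms(1) by blast
    next
      case False
      then obtain v where v: "v \<in> V" "X = component s t V F v" "X \<noteq> A" "X \<noteq> B" using X by blast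
      hence "\<not> linked s t F v (s e)" "\<not> linked s t F v (t e)" using not_AB by blast+
      hence "X = component s t V (insert e F) v" using v(2) component_insert[OF assms(3)] by simp
      thus ?thesis using v(1) by blast
    qed
  }
qed

lemma card_components_insert:
  assumes "finite V" "s e \<in> V" "t e \<in> V" "\<not> linked s t F (s e) (t e)"
  shows "card (component s t V (insert e F) ` V) + 1 = card (component s t V F ` V)"
proof -
  let ?S = "component s t V F ` V"
  let ?A = "component s t V F (s e)"
  let ?B = "component s t V F (t e)"
  have AB: "?A \<noteq> ?B" using component_eq_iff[OF assms(3)] assms(4) by blast
  have AB_S: "{?A, ?B} \<subseteq> ?S" using assms(2,3) by blast
  have "?A \<union> ?B \<notin> ?S"
  proof
    assume "?A \<union> ?B \<in> ?S"
    then obtain v where v: "v \<in> V" "?A \<union> ?B = component s t V F v" by blast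
    have "s e \<in> ?A" "t e \<in> ?B" using assms(2,3) by (simp_all add: component_def)
    hence "s e \<in> component s t V F v" "t e \<in> component s t V F v" using v(2) by blast+
    hence "linked s t F v (s e)" "linked s t F v (t e)" by (simp_all add: component_def)
    thus False using assms(4) linked_trans linked_sym by metis
  qed
  moreover have "card (?S - {?A, ?B}) + 2 = card ?S"
  proof -
    have "card {?A, ?B} = 2" using AB by simp
    moreover have "card {?A, ?B} \<le> card ?S" using AB_S assms(1) by (simp add: card_mono)
    ultimately show ?thesis using AB_S by (simp add: card_Diff_subset)
  qed
  ultimately show ?thesis using components_insert[OF assms(2-4)] assms(1) by simp
qed

lemma card_forest_plus_components:
  assumes "finite V" "finite F" "\<forall>e\<in>F. s e \<in> V \<and> t e \<in> V" "forest s t F"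
  shows "card F + card (component s t V F ` V) = card V"
  using assms(2-4)
proof (induction F rule: finite_induct)
  case empty
  have "component s t V {} ` V = (\<lambda>v. {v}) ` V"
    by (rule image_cong) (auto simp: component_def linked_empty_iff)
  thus ?case by (simp add: card_image)
next
  case (insert e F)
  have ends: "s e \<in> V" "t e \<in> V" using insert(4) by simp_all
  have "\<not> linked s t F (s e) (t e)"
    using insert(2,5) unfolding forest_def by auto
  hence "card (component s t V (insert e F) ` V) + 1 = card (component s t V F ` V)"
    using card_components_insert[where s=s and t=t and e=e and F=F, OF assms(1) ends] by blast
  moreover have "card F + card (component s t V F ` V) = card V"
    using insert forest_subset[OF insert(5)] by auto
  ultimately show ?case using insert(1,2) by simp
qed

lemma card_forest_unlinked:
  assumes "finite V" "finite F" "\<forall>e\<in>F. s e \<in> V \<and> t e \<in> V" "forest s t F"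
    "x \<in> V" "y \<in> V" "\<not> linked s t F x y"
  shows "card F + 2 \<le> card V"
proof -
  have "component s t V F x \<noteq> component s t V F y"
    using component_eq_iff[OF assms(6)] assms(7) by blast
  hence "card {component s t V F x, component s t V F y} = 2" by simp
  moreover have "{component s t V F x, component s t V F y} \<subseteq> component s t V F ` V"
    using assms(5,6) by blast
  ultimately have "2 \<le> card (component s t V F ` V)"
    using assms(1) by (metis card_mono finite_imageI)
  thus ?thesis using card_forest_plus_components[OF assms(1-4)] by linarith
qed

lemma card_forest_less:
  assumes "finite V" "finite F" "\<forall>e\<in>F. s e \<in> V \<and> t e \<in> V" "forest s t F" "x \<in> V"
  shows "card F < card V"
proof -
  have "component s t V F ` V \<noteq> {}" using assms(5) by blast
  hence "0 < card (component s t V F ` V)" using assms(1) by (simp add: card_gt_0_iff)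
  thus ?thesis using card_forest_plus_components[OF assms(1-4)] by linarith
qed

section \<open>Packings of forests\<close>

definition forest_packing :: "'e set \<Rightarrow> ('e \<Rightarrow> 'v) \<Rightarrow> ('e \<Rightarrow> 'v) \<Rightarrow> nat \<Rightarrow> (nat \<Rightarrow> 'e set) \<Rightarrow> bool" where
  "forest_packing I s t k F \<longleftrightarrow>
     (\<forall>i<k. F i \<subseteq> I \<and> forest s t (F i)) \<and> (\<forall>i<k. \<forall>j<k. i \<noteq> j \<longrightarrow> F i \<inter> F j = {})"

definition packing_size :: "nat \<Rightarrow> (nat \<Rightarrow> 'e set) \<Rightarrow> nat" where
  "packing_size k F = (\<Sum>i<k. card (F i))"

lemma packing_size_update:
  assumes "i < k"
  shows "packing_size k (F(i := X)) + card (F i) = packing_size k F + card X"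
proof -
  have "(\<Sum>j\<in>{..<k}-{i}. card ((F(i := X)) j)) = (\<Sum>j\<in>{..<k}-{i}. card (F j))"
    by (rule sum.cong) auto
  moreover have "packing_size k (F(i := X)) = card X + (\<Sum>j\<in>{..<k}-{i}. card ((F(i := X)) j))"
    "packing_size k F = card (F i) + (\<Sum>j\<in>{..<k}-{i}. card (F j))"
    unfolding packing_size_def using assms by (simp_all add: sum.remove[of "{..<k}" i])
  ultimately show ?thesis by simp
qed

lemma packing_size_le:
  assumes "forest_packing I s t k F" "finite I"
  shows "packing_size k F \<le> k * card I"
proof -
  have "card (F i) \<le> card I" if "i < k" for i
    using assms that unfolding forest_packing_def by (simp add: card_mono)
  hence "(\<Sum>i<k. card (F i)) \<le> (\<Sum>i<k. card I)" by (intro sum_mono) simp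
  thus ?thesis by (simp add: packing_size_def)
qed

lemma forest_packing_update:
  assumes "forest_packing I s t k F" "j < k" "X \<subseteq> I" "forest s t X"
    "\<And>i. i < k \<Longrightarrow> i \<noteq> j \<Longrightarrow> X \<inter> F i = {}"
  shows "forest_packing I s t k (F(j := X))"
  unfolding forest_packing_def
proof (intro conjI allI impI)
  fix i assume "i < k"
  thus "(F(j := X)) i \<subseteq> I" using assms(1,3) unfolding forest_packing_def by simp
next
  fix i assume "i < k"
  thus "forest s t ((F(j := X)) i)" using assms(1,4) unfolding forest_packing_def by simp
next
  fix i i' assume "i < k" "i' < k" "i \<noteq> i'"
  moreover have "F i \<inter> F i' = {}" if "i \<noteq> i'" "i < k" "i' < k" for i i'
    using assms(1) that unfolding forest_packing_def by blast
  ultimately show "(F(j := X)) i \<inter> (F(j := X)) i' = {}"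
    using assms(5) by (cases "i = j"; cases "i' = j") (auto simp: Int_commute)
qed

lemma card_insert_remove:
  assumes "finite A" "e \<notin> A" "e' \<in> A"
  shows "card (insert e A - {e'}) = card A"
proof -
  have "insert e A - {e'} = insert e (A - {e'})" using assms(2,3) by blast
  also have "card \<dots> = Suc (card (A - {e'}))" using assms(1,2) by simp
  also have "\<dots> = card A" using card.remove[OF assms(1,3)] by simp
  finally show ?thesis .
qed

text \<open>A partition of V is encoded by a map f whose fibres are its classes.\<close>

definition partition_condition :: "'v set \<Rightarrow> 'e set \<Rightarrow> ('e \<Rightarrow> 'v) \<Rightarrow> ('e \<Rightarrow> 'v) \<Rightarrow> nat \<Rightarrow> bool" where
  "partition_condition V I s t k \<longleftrightarrow>
     (\<forall>f::'v \<Rightarrow> 'v. k * (card (f ` V) - 1) \<le> card {e\<in>I. f (s e) \<noteq> f (t e)})"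

definition spans :: "('e \<Rightarrow> 'v) \<Rightarrow> ('e \<Rightarrow> 'v) \<Rightarrow> 'e set \<Rightarrow> 'v set \<Rightarrow> bool" where
  "spans s t A U \<longleftrightarrow> (\<forall>x\<in>U. \<forall>y\<in>U. linked s t {e \<in> A. s e \<in> U \<and> t e \<in> U} x y)"

text \<open>The free edges are those left uncovered by some packing reachable from a maximum packing
  by single-edge exchanges. Maximality forces every forest to span each uncovered edge, and the
  edges of that fundamental path can be exchanged for it, so they are free too.\<close>

locale max_forest_packing =
  fixes V :: "'v set" and I :: "'e set" and s t :: "'e \<Rightarrow> 'v" and k :: nat and F :: "nat \<Rightarrow> 'e set"
  assumes finV: "finite V" and finI: "finite I" and ends: "\<forall>e\<in>I. s e \<in> V \<and> t e \<in> V"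
    and packing_F: "forest_packing I s t k F"
    and F_max: "\<And>G. forest_packing I s t k G \<Longrightarrow> packing_size k G \<le> packing_size k F"
begin

definition exchange :: "(nat \<Rightarrow> 'e set) \<Rightarrow> (nat \<Rightarrow> 'e set) \<Rightarrow> bool" where
  "exchange G H \<longleftrightarrow> (\<exists>j<k. \<exists>e e'. e \<in> I \<and> (\<forall>i<k. e \<notin> G i) \<and> e' \<in> G j \<and>
      forest s t (insert e (G j) - {e'}) \<and> H = G(j := insert e (G j) - {e'}))"

definition reachable :: "(nat \<Rightarrow> 'e set) set" where
  "reachable = {G. (F, G) \<in> {(X, Y). exchange X Y}\<^sup>*}"

definition free_edges :: "'e set" where
  "free_edges = {e \<in> I. \<exists>G\<in>reachable. \<forall>i<k. e \<notin> G i}"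

lemma F_reachable: "F \<in> reachable"
  unfolding reachable_def by simp

lemma forest_packing_finite:
  assumes "forest_packing I s t k G" "i < k"
  shows "finite (G i)"
proof -
  have "G i \<subseteq> I" using assms unfolding forest_packing_def by blast
  thus ?thesis using finI by (rule finite_subset)
qed

lemma exchange_preserves_packing:
  assumes "forest_packing I s t k G" "j < k" "e \<in> I" "\<forall>i<k. e \<notin> G i" "e' \<in> G j"
    "forest s t (insert e (G j) - {e'})"
  shows "forest_packing I s t k (G(j := insert e (G j) - {e'}))"
    "packing_size k (G(j := insert e (G j) - {e'})) = packing_size k G"
proof -
  have Gj: "G j \<subseteq> I" and disj: "\<And>i. i < k \<Longrightarrow> i \<noteq> j \<Longrightarrow> G j \<inter> G i = {}"
    using assms(1,2) unfolding forest_packing_def by blast+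
  show "forest_packing I s t k (G(j := insert e (G j) - {e'}))"
    by (rule forest_packing_update[OF assms(1,2)]) (use Gj disj assms(3,4,6) in auto)
  have "e \<notin> G j" using assms(2,4) by blast
  hence "card (insert e (G j) - {e'}) = card (G j)"
    using card_insert_remove[OF forest_packing_finite[OF assms(1,2)] _ assms(5)] by blast
  thus "packing_size k (G(j := insert e (G j) - {e'})) = packing_size k G"
    using packing_size_update[OF assms(2), of G "insert e (G j) - {e'}"] by linarith
qed

lemma reachable_packing:
  assumes "G \<in> reachable"
  shows "forest_packing I s t k G" "packing_size k G = packing_size k F"
proof -
  have "(F, G) \<in> {(X, Y). exchange X Y}\<^sup>*" using assms unfolding reachable_def by simp
  hence "forest_packing I s t k G \<and> packing_size k G = packing_size k F"
  proof (induction rule: rtrancl_induct)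
    case (step G H)
    then obtain j e e' where j: "j < k" "e \<in> I" "\<forall>i<k. e \<notin> G i" "e' \<in> G j"
      "forest s t (insert e (G j) - {e'})" and H: "H = G(j := insert e (G j) - {e'})"
      unfolding exchange_def by blast
    have "forest_packing I s t k G" using step(3) by simp
    hence "forest_packing I s t k H" "packing_size k H = packing_size k G"
      using exchange_preserves_packing[OF _ j] H by simp_all
    thus ?case using step(3) by simp
  qed (use packing_F in simp)
  thus "forest_packing I s t k G" "packing_size k G = packing_size k F" by simp_all
qed

lemma exchange_reachable:
  assumes "G \<in> reachable" "j < k" "e \<in> I" "\<forall>i<k. e \<notin> G i" "e' \<in> G j"
    "forest s t (insert e (G j) - {e'})"
  shows "G(j := insert e (G j) - {e'}) \<in> reachable" "e' \<in> I"
    "\<forall>i<k. e' \<notin> (G(j := insert e (G j) - {e'})) i"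
proof -
  have "exchange G (G(j := insert e (G j) - {e'}))"
    unfolding exchange_def using assms(2-6) by blast
  thus "G(j := insert e (G j) - {e'}) \<in> reachable"
    using assms(1) unfolding reachable_def by (auto intro: rtrancl_into_rtrancl)
  have packing: "forest_packing I s t k G" using reachable_packing assms(1) by blast
  thus "e' \<in> I" using assms(2,5) unfolding forest_packing_def by blast
  have "e' \<notin> G i" if "i < k" "i \<noteq> j" for i
    using packing that assms(2,5) unfolding forest_packing_def by blast
  thus "\<forall>i<k. e' \<notin> (G(j := insert e (G j) - {e'})) i" by simp
qed

lemma exchange_free_edge:
  assumes "G \<in> reachable" "j < k" "e \<in> I" "\<forall>i<k. e \<notin> G i" "e' \<in> G j"
    "forest s t (insert e (G j) - {e'})"
  shows "e' \<in> free_edges"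
  using exchange_reachable[OF assms] unfolding free_edges_def by blast

lemma uncovered_edge_linked:
  assumes "G \<in> reachable" "e \<in> I" "\<forall>i<k. e \<notin> G i" "i < k"
  shows "linked s t (G i) (s e) (t e)"
proof (rule ccontr)
  assume "\<not> linked s t (G i) (s e) (t e)"
  hence "forest s t (insert e (G i))"
    using reachable_packing(1)[OF assms(1)] assms(4) unfolding forest_packing_def
    by (blast intro: forest_insert)
  moreover have "insert e (G i) \<subseteq> I" "\<And>j. j < k \<Longrightarrow> j \<noteq> i \<Longrightarrow> insert e (G i) \<inter> G j = {}"
    using reachable_packing(1)[OF assms(1)] assms(2-4) unfolding forest_packing_def by blast+
  ultimately have "forest_packing I s t k (G(i := insert e (G i)))"
    using forest_packing_update[OF reachable_packing(1)[OF assms(1)] assms(4)] by blast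
  moreover have "card (insert e (G i)) = Suc (card (G i))"
    using forest_packing_finite[OF reachable_packing(1)[OF assms(1)] assms(4)] assms(3,4) by simp
  hence "packing_size k (G(i := insert e (G i))) = packing_size k F + 1"
    using packing_size_update[OF assms(4), of G "insert e (G i)"] reachable_packing(2)[OF assms(1)]
    by linarith
  ultimately show False using F_max by (metis add_le_same_cancel1 not_one_le_zero)
qed

lemma uncovered_edge_linked_by_free_edges:
  assumes "G \<in> reachable" "e \<in> I" "\<forall>i<k. e \<notin> G i" "i < k"
  shows "linked s t (G i \<inter> free_edges) (s e) (t e)"
proof -
  have forest_Gi: "forest s t (G i)"
    using reachable_packing(1)[OF assms(1)] assms(4) unfolding forest_packing_def by blast
  have "linked s t {e' \<in> G i. \<not> linked s t (G i - {e'}) (s e) (t e)} (s e) (t e)"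
    using forest_linked_by_bridges[OF forest_Gi forest_packing_finite[OF reachable_packing(1)[OF assms(1)] assms(4)]
        order_refl uncovered_edge_linked[OF assms]] .
  moreover have "{e' \<in> G i. \<not> linked s t (G i - {e'}) (s e) (t e)} \<subseteq> G i \<inter> free_edges"
  proof
    fix e' assume "e' \<in> {e' \<in> G i. \<not> linked s t (G i - {e'}) (s e) (t e)}"
    hence e': "e' \<in> G i" "\<not> linked s t (G i - {e'}) (s e) (t e)" by auto
    have "e' \<in> free_edges"
      using exchange_free_edge[OF assms(1,4,2,3) e'(1) forest_exchange[OF forest_Gi e'(2)]] .
    thus "e' \<in> G i \<inter> free_edges" using e'(1) by blast
  qed
  ultimately show ?thesis by (rule linked_mono)
qed

lemma exchange_preserves_free_linkage:
  assumes "G \<in> reachable" "exchange G H" "i < k"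
  shows "linked s t (H i \<inter> free_edges) x y \<longleftrightarrow> linked s t (G i \<inter> free_edges) x y"
proof -
  obtain j e e' where j: "j < k" "e \<in> I" "\<forall>i<k. e \<notin> G i" "e' \<in> G j"
    "forest s t (insert e (G j) - {e'})" and H: "H = G(j := insert e (G j) - {e'})"
    using assms(2) unfolding exchange_def by blast
  show ?thesis
  proof (cases "i = j")
    case False
    thus ?thesis using H by simp
  next
    case True
    let ?A = "G j \<inter> free_edges"
    have H_reach: "H \<in> reachable" using exchange_reachable(1)[OF assms(1) j] H by simp
    have e'_free: "e' \<in> free_edges" using exchange_free_edge[OF assms(1) j] .
    have "e \<in> free_edges" using assms(1) j(2,3) unfolding free_edges_def by blast
    moreover have "e \<noteq> e'" using j(1,3,4) by blast
    ultimately have Hi: "H i \<inter> free_edges = insert e ?A - {e'}" using True H by auto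
    have "e' \<in> I" "\<forall>i<k. e' \<notin> H i" using exchange_reachable(2,3)[OF assms(1) j] H by simp_all
    hence e'_linked: "linked s t (insert e ?A - {e'}) (s e') (t e')"
      using uncovered_edge_linked_by_free_edges[OF H_reach _ _ j(1)] Hi True by simp
    have "insert e' (insert e ?A - {e'}) = insert e ?A" using j(4) e'_free by blast
    hence "linked s t (H i \<inter> free_edges) x y \<longleftrightarrow> linked s t (insert e ?A) x y"
      using linked_insert_redundant[OF e'_linked, of x y] Hi by simp
    also have "\<dots> \<longleftrightarrow> linked s t ?A x y"
      using linked_insert_redundant[OF uncovered_edge_linked_by_free_edges[OF assms(1) j(2,3,1)]] .
    finally show ?thesis using True by simp
  qed
qed

lemma reachable_free_linkage:
  assumes "G \<in> reachable" "i < k"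
  shows "linked s t (G i \<inter> free_edges) x y \<longleftrightarrow> linked s t (F i \<inter> free_edges) x y"
proof -
  have "(F, G) \<in> {(X, Y). exchange X Y}\<^sup>*" using assms(1) unfolding reachable_def by simp
  thus ?thesis
  proof (induction rule: rtrancl_induct)
    case (step G H)
    have "G \<in> reachable" using step(1) unfolding reachable_def by simp
    thus ?case using exchange_preserves_free_linkage[OF _ _ assms(2)] step(2,3) by simp
  qed simp
qed

lemma linked_free_edges_in_forest:
  assumes "i < k" "linked s t free_edges x y"
  shows "linked s t (F i \<inter> free_edges) x y"
proof (rule linked_via_linked_edges[OF assms(2)])
  fix e assume "e \<in> free_edges"
  then obtain G where G: "G \<in> reachable" "e \<in> I" "\<forall>i<k. e \<notin> G i" unfolding free_edges_def by blast
  show "linked s t (F i \<inter> free_edges) (s e) (t e)"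
    using uncovered_edge_linked_by_free_edges[OF G assms(1)] reachable_free_linkage[OF G(1) assms(1)] by simp
qed

lemma uncovered_proper_edge:
  assumes "partition_condition V I s t k" "i0 < k" "x0 \<in> V" "y0 \<in> V" "\<not> linked s t (F i0) x0 y0"
  obtains e0 where "e0 \<in> I" "s e0 \<noteq> t e0" "\<forall>i<k. e0 \<notin> F i"
proof -
  let ?N = "{e\<in>I. s e \<noteq> t e}"
  have "k * (card (id ` V) - 1) \<le> card {e\<in>I. id (s e) \<noteq> id (t e)}"
    using assms(1) unfolding partition_condition_def by blast
  hence N: "k * (card V - 1) \<le> card ?N" by simp
  have Fi: "F i \<subseteq> I" "forest s t (F i)" if "i < k" for i
    using packing_F that unfolding forest_packing_def by blast+
  have ends_F: "\<forall>e\<in>F i. s e \<in> V \<and> t e \<in> V" if "i < k" for i using Fi(1)[OF that] ends by blast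
  have "card (F i) + (if i = i0 then 1 else 0) \<le> card V - 1" if "i < k" for i
    using card_forest_less[OF finV forest_packing_finite[OF packing_F that] ends_F[OF that] Fi(2)[OF that] assms(3)]
      card_forest_unlinked[OF finV forest_packing_finite[OF packing_F assms(2)] ends_F[OF assms(2)] Fi(2)[OF assms(2)]
        assms(3-5)]
    by auto
  hence "(\<Sum>i<k. card (F i) + (if i = i0 then 1 else 0)) \<le> (\<Sum>i<k. card V - 1)" by (intro sum_mono) simp
  hence lt: "packing_size k F < card ?N" using N assms(2) by (simp add: sum.distrib packing_size_def)
  have "\<forall>i\<in>{..<k}. \<forall>j\<in>{..<k}. i \<noteq> j \<longrightarrow> F i \<inter> F j = {}"
    using packing_F unfolding forest_packing_def by blast
  hence card_F: "card (\<Union>i<k. F i) = packing_size k F"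
    unfolding packing_size_def by (rule card_UN_disjoint[rotated 2]) (use forest_packing_finite[OF packing_F] in auto)
  have "\<not> ?N \<subseteq> (\<Union>i<k. F i)"
  proof
    assume "?N \<subseteq> (\<Union>i<k. F i)"
    hence "card ?N \<le> card (\<Union>i<k. F i)" using forest_packing_finite[OF packing_F] by (intro card_mono) auto
    thus False using lt card_F by simp
  qed
  then obtain e0 where "e0 \<in> ?N" "e0 \<notin> (\<Union>i<k. F i)" by blast
  thus ?thesis using that by blast
qed

lemma free_component_spanned:
  assumes "e0 \<in> free_edges" "i < k"
  shows "spans s t (F i) (component s t V free_edges (s e0))"
  unfolding spans_def
proof (intro ballI)
  let ?U = "component s t V free_edges (s e0)"
  fix x y assume x: "x \<in> ?U" and y: "y \<in> ?U"
  have "linked s t free_edges (s e0) x" "linked s t free_edges (s e0) y"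
    using x y unfolding component_def by simp_all
  hence "linked s t free_edges x y" by (blast intro: linked_trans linked_sym)
  hence linked_xy: "linked s t (F i \<inter> free_edges) x y" by (rule linked_free_edges_in_forest[OF assms(2)])
  have closed: "s e \<in> ?U \<longleftrightarrow> t e \<in> ?U" if "e \<in> F i \<inter> free_edges" for e
  proof -
    have e: "e \<in> free_edges" using that by blast
    have "e \<in> I" using e unfolding free_edges_def by blast
    hence "s e \<in> V" "t e \<in> V" using ends by simp_all
    have "linked s t free_edges (s e0) (s e) \<longleftrightarrow> linked s t free_edges (s e0) (t e)"
    proof
      assume "linked s t free_edges (s e0) (s e)"
      thus "linked s t free_edges (s e0) (t e)" using linked_edge[OF e] by (rule linked_trans)
    next
      assume "linked s t free_edges (s e0) (t e)"
      thus "linked s t free_edges (s e0) (s e)" using linked_edge_rev[OF e] by (rule linked_trans)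
    qed
    thus ?thesis using \<open>s e \<in> V\<close> \<open>t e \<in> V\<close> unfolding component_def by simp
  qed
  have "linked s t {e \<in> F i \<inter> free_edges. s e \<in> ?U \<and> t e \<in> ?U} x y"
    using linked_within_closed_set[of s t "F i \<inter> free_edges", OF linked_xy x closed] by blast
  thus "linked s t {e \<in> F i. s e \<in> ?U \<and> t e \<in> ?U} x y" by (rule linked_mono) blast
qed

lemma spanned_subset_exists:
  assumes "partition_condition V I s t k" "i0 < k" "x0 \<in> V" "y0 \<in> V" "\<not> linked s t (F i0) x0 y0"
  obtains U where "U \<subseteq> V" "2 \<le> card U" "\<forall>i<k. spans s t (F i) U"
proof -
  obtain e0 where e0: "e0 \<in> I" "s e0 \<noteq> t e0" "\<forall>i<k. e0 \<notin> F i"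
    using uncovered_proper_edge[OF assms] .
  hence free: "e0 \<in> free_edges" using F_reachable unfolding free_edges_def by blast
  let ?U = "component s t V free_edges (s e0)"
  have "{s e0, t e0} \<subseteq> ?U" using ends e0(1) linked_edge[OF free] by (simp add: component_def)
  hence "2 \<le> card ?U" using e0(2) finV card_mono[of ?U "{s e0, t e0}"] by (simp add: component_def)
  moreover have "?U \<subseteq> V" by (simp add: component_def)
  ultimately show ?thesis using that free_component_spanned[OF free] by blast
qed

end

lemma max_forest_packing_exists:
  assumes "finite V" "finite I" "\<forall>e\<in>I. s e \<in> V \<and> t e \<in> V"
  obtains F where "max_forest_packing V I s t k F"
proof -
  have "forest_packing I s t k (\<lambda>_. {})" unfolding forest_packing_def forest_def by simp
  moreover have "\<forall>G. forest_packing I s t k G \<longrightarrow> packing_size k G < k * card I + 1"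
  proof (intro allI impI)
    fix G assume "forest_packing I s t k G"
    thus "packing_size k G < k * card I + 1" using packing_size_le[OF _ assms(2)] by fastforce
  qed
  ultimately obtain F where "forest_packing I s t k F"
    "\<And>G. forest_packing I s t k G \<Longrightarrow> packing_size k G \<le> packing_size k F"
    using ex_has_greatest_nat[of "forest_packing I s t k" _ "packing_size k"] by blast
  hence "max_forest_packing V I s t k F" using assms by (simp add: max_forest_packing_def)
  thus ?thesis by (rule that)
qed

section \<open>The tree-packing theorem\<close>

definition spanning_packing :: "'v set \<Rightarrow> 'e set \<Rightarrow> ('e \<Rightarrow> 'v) \<Rightarrow> ('e \<Rightarrow> 'v) \<Rightarrow> nat \<Rightarrow> (nat \<Rightarrow> 'e set) \<Rightarrow> bool" where
  "spanning_packing V I s t k T \<longleftrightarrow>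
     (\<forall>i<k. T i \<subseteq> I \<and> (\<forall>x\<in>V. \<forall>y\<in>V. linked s t (T i) x y)) \<and>
     (\<forall>i<k. \<forall>j<k. i \<noteq> j \<longrightarrow> T i \<inter> T j = {})"

definition collapse :: "'v set \<Rightarrow> 'v \<Rightarrow> 'v \<Rightarrow> 'v" where
  "collapse U u v = (if v \<in> U then u else v)"

lemma collapse_eq_iff: "u \<in> U \<Longrightarrow> collapse U u v = collapse U u w \<longleftrightarrow> v \<in> U \<and> w \<in> U \<or> v = w"
  unfolding collapse_def by auto

lemma card_collapse_less:
  assumes "finite V" "U \<subseteq> V" "2 \<le> card U" "u \<in> U"
  shows "card (collapse U u ` V) < card V"
proof -
  have "collapse U u ` V \<subseteq> insert u (V - U)" unfolding collapse_def by auto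
  hence "card (collapse U u ` V) \<le> card (insert u (V - U))" using assms(1) by (intro card_mono) auto
  also have "\<dots> \<le> Suc (card (V - U))" using assms(1) by (simp add: card_insert_if)
  finally have "card (collapse U u ` V) \<le> Suc (card (V - U))" .
  moreover have "card (V - U) = card V - card U"
    using assms(2) finite_subset[OF assms(2,1)] by (simp add: card_Diff_subset)
  moreover have "card U \<le> card V" using assms(1,2) by (rule card_mono)
  ultimately show ?thesis using assms(3) by linarith
qed

lemma partition_condition_contract:
  fixes \<phi> :: "'v \<Rightarrow> 'v"
  assumes "partition_condition V I s t k" "{e \<in> I. \<phi> (s e) \<noteq> \<phi> (t e)} \<subseteq> J" "J \<subseteq> I"
  shows "partition_condition (\<phi> ` V) J (\<phi> \<circ> s) (\<phi> \<circ> t) k"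
  unfolding partition_condition_def
proof
  fix f :: "'v \<Rightarrow> 'v"
  have "k * (card ((f \<circ> \<phi>) ` V) - 1) \<le> card {e \<in> I. (f \<circ> \<phi>) (s e) \<noteq> (f \<circ> \<phi>) (t e)}"
    using assms(1) unfolding partition_condition_def by blast
  moreover have "{e \<in> I. (f \<circ> \<phi>) (s e) \<noteq> (f \<circ> \<phi>) (t e)} = {e \<in> J. f ((\<phi> \<circ> s) e) \<noteq> f ((\<phi> \<circ> t) e)}"
    using assms(2,3) by auto
  ultimately show "k * (card (f ` \<phi> ` V) - 1) \<le> card {e \<in> J. f ((\<phi> \<circ> s) e) \<noteq> f ((\<phi> \<circ> t) e)}"
    by (simp add: image_comp)
qed

lemma linked_uncontract:
  assumes "\<forall>e\<in>A. s e \<in> V \<and> t e \<in> V" "\<And>v w. v \<in> V \<Longrightarrow> w \<in> V \<Longrightarrow> \<phi> v = \<phi> w \<Longrightarrow> linked s t D v w"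
    "linked (\<phi> \<circ> s) (\<phi> \<circ> t) A (\<phi> x) (\<phi> y)" "x \<in> V" "y \<in> V"
  shows "linked s t (A \<union> D) x y"
proof -
  have lift_D: "linked s t (A \<union> D) v w" if "v \<in> V" "w \<in> V" "\<phi> v = \<phi> w" for v w
    using linked_mono[OF assms(2)[OF that] Un_upper2] .
  have "\<forall>y\<in>V. \<phi> y = b \<longrightarrow> linked s t (A \<union> D) x y" if "linked (\<phi> \<circ> s) (\<phi> \<circ> t) A (\<phi> x) b" for b
    using that unfolding linked_def[of "\<phi> \<circ> s"]
  proof (induction rule: rtrancl_induct)
    case base
    thus ?case using lift_D assms(4) by simp
  next
    case (step b c)
    have "\<exists>p q. p \<in> V \<and> q \<in> V \<and> b = \<phi> p \<and> c = \<phi> q \<and> linked s t A p q"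
      using step(2) by (rule link_rel_cases) (use assms(1) in \<open>auto intro: linked_edge linked_edge_rev\<close>)
    then obtain p q where pq: "p \<in> V" "q \<in> V" "b = \<phi> p" "c = \<phi> q" "linked s t (A \<union> D) p q"
      using linked_mono[of s t A] by blast
    show ?case
    proof (intro ballI impI)
      fix y assume "y \<in> V" "\<phi> y = c"
      hence "linked s t (A \<union> D) q y" using lift_D pq(2,4) by simp
      moreover have "linked s t (A \<union> D) x p" using step(3) pq(1,3) by simp
      ultimately show "linked s t (A \<union> D) x y" using pq(5) by (blast intro: linked_trans)
    qed
  qed
  thus ?thesis using assms(3,5) by blast
qed

lemma spanning_packing_uncontract:
  assumes ends: "\<forall>e\<in>I. s e \<in> V \<and> t e \<in> V" and "U \<subseteq> V" "u \<in> U"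
    and packing_T: "spanning_packing (collapse U u ` V) {e \<in> I. \<not> (s e \<in> U \<and> t e \<in> U)}
      (collapse U u \<circ> s) (collapse U u \<circ> t) k T"
    and packing_F: "forest_packing I s t k F" and spans_U: "\<forall>i<k. spans s t (F i) U"
  shows "spanning_packing V I s t k (\<lambda>i. T i \<union> {e \<in> F i. s e \<in> U \<and> t e \<in> U})"
proof -
  let ?c = "collapse U u"
  have T_sub: "T i \<subseteq> {e \<in> I. \<not> (s e \<in> U \<and> t e \<in> U)}" if "i < k" for i
    using packing_T that unfolding spanning_packing_def by blast
  have T_linked: "linked (?c \<circ> s) (?c \<circ> t) (T i) (?c x) (?c y)" if "i < k" "x \<in> V" "y \<in> V" for i x y
    using packing_T that unfolding spanning_packing_def by blast
  have T_disj: "T i \<inter> T j = {}" if "i < k" "j < k" "i \<noteq> j" for i j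
    using packing_T that unfolding spanning_packing_def by blast
  have F_sub: "F i \<subseteq> I" if "i < k" for i
    using packing_F that unfolding forest_packing_def by blast
  have F_disj: "F i \<inter> F j = {}" if "i < k" "j < k" "i \<noteq> j" for i j
    using packing_F that unfolding forest_packing_def by blast
  have linked_T: "linked s t (T i \<union> {e \<in> F i. s e \<in> U \<and> t e \<in> U}) x y"
    if i: "i < k" and xy: "x \<in> V" "y \<in> V" for i x y
  proof (rule linked_uncontract[OF _ _ T_linked[OF i xy] xy])
    show "\<forall>e\<in>T i. s e \<in> V \<and> t e \<in> V" using T_sub[OF i] ends by blast
    fix v w assume "v \<in> V" "w \<in> V" "?c v = ?c w"
    hence "v \<in> U \<and> w \<in> U \<or> v = w" using collapse_eq_iff[OF assms(3)] by blast
    thus "linked s t {e \<in> F i. s e \<in> U \<and> t e \<in> U} v w" using spans_U i unfolding spans_def by auto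
  qed
  show ?thesis
    unfolding spanning_packing_def
  proof (intro conjI allI impI ballI)
    fix i assume "i < k"
    thus "T i \<union> {e \<in> F i. s e \<in> U \<and> t e \<in> U} \<subseteq> I" using T_sub F_sub by blast
    fix x y assume "x \<in> V" "y \<in> V"
    thus "linked s t (T i \<union> {e \<in> F i. s e \<in> U \<and> t e \<in> U}) x y" using linked_T \<open>i < k\<close> by blast
  next
    fix i j assume ij: "i < k" "j < k" "i \<noteq> j"
    have "T i \<inter> T j = {}" "F i \<inter> F j = {}" using T_disj[OF ij] F_disj[OF ij] by simp_all
    moreover have "T i \<inter> {e \<in> F j. s e \<in> U \<and> t e \<in> U} = {}" "{e \<in> F i. s e \<in> U \<and> t e \<in> U} \<inter> T j = {}"
      using T_sub[OF ij(1)] T_sub[OF ij(2)] by blast+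
    ultimately show "(T i \<union> {e \<in> F i. s e \<in> U \<and> t e \<in> U}) \<inter> (T j \<union> {e \<in> F j. s e \<in> U \<and> t e \<in> U}) = {}"
      by blast
  qed
qed

theorem tree_packing:
  assumes "finite V" "finite I" "\<forall>e\<in>I. s e \<in> V \<and> t e \<in> V" "partition_condition V I s t k"
  shows "\<exists>T. spanning_packing V I s t k T"
  using assms
proof (induction "card V" arbitrary: V I s t rule: less_induct)
  case less
  obtain F where "max_forest_packing V I s t k F" using max_forest_packing_exists[OF less(2-4)] .
  then interpret max_forest_packing V I s t k F .
  show ?case
  proof (cases "\<forall>i<k. \<forall>x\<in>V. \<forall>y\<in>V. linked s t (F i) x y")
    case True
    hence "spanning_packing V I s t k F"
      using packing_F unfolding spanning_packing_def forest_packing_def by blast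
    thus ?thesis by blast
  next
    case False
    then obtain i0 x0 y0 where "i0 < k" "x0 \<in> V" "y0 \<in> V" "\<not> linked s t (F i0) x0 y0" by blast
    then obtain U where U: "U \<subseteq> V" "2 \<le> card U" "\<forall>i<k. spans s t (F i) U"
      using spanned_subset_exists[OF less(5)] by metis
    then obtain u where u: "u \<in> U" by fastforce
    let ?c = "collapse U u"
    let ?J = "{e \<in> I. \<not> (s e \<in> U \<and> t e \<in> U)}"
    have "card (?c ` V) < card V" using card_collapse_less[OF less(2) U(1,2) u] .
    moreover have "partition_condition (?c ` V) ?J (?c \<circ> s) (?c \<circ> t) k"
      by (rule partition_condition_contract[OF less(5)]) (auto simp: collapse_def)
    moreover have "finite (?c ` V)" "finite ?J" "\<forall>e\<in>?J. (?c \<circ> s) e \<in> ?c ` V \<and> (?c \<circ> t) e \<in> ?c ` V"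
      using less(2-4) by auto
    ultimately obtain T where "spanning_packing (?c ` V) ?J (?c \<circ> s) (?c \<circ> t) k T"
      using less(1) by blast
    thus ?thesis using spanning_packing_uncontract[OF less(4) U(1) u _ packing_F U(3)] by blast
  qed
qed

section \<open>Simple graphs\<close>

text \<open>An arbitrary orientation of each edge turns a simple graph into a multigraph.\<close>

definition end1 :: "'a set \<Rightarrow> 'a" where
  "end1 e = (SOME x. x \<in> e)"

definition end2 :: "'a set \<Rightarrow> 'a" where
  "end2 e = (SOME y. y \<in> e \<and> y \<noteq> end1 e)"

lemma edge_ends:
  assumes "card e = 2"
  shows "e = {end1 e, end2 e}" "end1 e \<noteq> end2 e"
proof -
  obtain x y where xy: "e = {x, y}" "x \<noteq> y" using assms by (auto simp: card_2_iff)
  have 1: "end1 e \<in> e" unfolding end1_def using xy by (metis insertI1 someI)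
  have "\<exists>y. y \<in> e \<and> y \<noteq> end1 e" using xy 1 by auto
  hence 2: "end2 e \<in> e" and 3: "end2 e \<noteq> end1 e" unfolding end2_def by (metis (mono_tags, lifting) someI_ex)+
  show "end1 e \<noteq> end2 e" using 3 by simp
  show "e = {end1 e, end2 e}" using 1 2 3 xy by auto
qed

lemma link_rel_ends:
  assumes "\<forall>e\<in>A. card e = 2"
  shows "link_rel end1 end2 A = adj A"
proof
  show "link_rel end1 end2 A \<subseteq> adj A"
    using edge_ends(1) assms unfolding link_rel_def adj_def by (fastforce simp: insert_commute)
next
  show "adj A \<subseteq> link_rel end1 end2 A"
  proof
    fix p assume "p \<in> adj A"
    then obtain u v where p: "p = (u, v)" "{u, v} \<in> A" unfolding adj_def by blast
    have "{u, v} = {end1 {u, v}, end2 {u, v}}" using edge_ends(1) assms p(2) by blast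
    hence "p = (end1 {u, v}, end2 {u, v}) \<or> p = (end2 {u, v}, end1 {u, v})"
      using p(1) by (auto simp: doubleton_eq_iff)
    thus "p \<in> link_rel end1 end2 A" using p(2) unfolding link_rel_def by blast
  qed
qed

lemma linked_ends_iff:
  "\<forall>e\<in>A. card e = 2 \<Longrightarrow> linked end1 end2 A x y \<longleftrightarrow> (x, y) \<in> (adj A)\<^sup>*"
  unfolding linked_def by (simp add: link_rel_ends)

lemma edge_connectivity_le_cut:
  assumes "x \<in> V" "x \<in> W" "y \<in> V" "y \<notin> W"
  shows "edge_connectivity V E \<le> card {e \<in> E. \<exists>u\<in>e. \<exists>w\<in>e. u \<in> W \<and> w \<notin> W}"
    (is "_ \<le> card ?D")
proof -
  have stays: "w \<in> W" if "(x, w) \<in> (adj (E - ?D))\<^sup>*" for w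
    using that by induction (use assms(2) in \<open>auto simp: adj_def\<close>)
  have "\<not> connected_graph V (E - ?D)"
  proof
    assume "connected_graph V (E - ?D)"
    hence "(x, y) \<in> (adj (E - ?D))\<^sup>*" using assms(1,3) unfolding connected_graph_def by blast
    thus False using stays assms(4) by blast
  qed
  hence "\<exists>S. S \<subseteq> E \<and> card S = card ?D \<and> \<not> connected_graph V (E - S)"
    by (intro exI[of _ ?D]) auto
  thus ?thesis unfolding edge_connectivity_def by (rule Least_le)
qed

lemma sum_card_incident_le:
  assumes "finite C" "finite A"
  shows "(\<Sum>c\<in>C. card {e \<in> A. h1 e = c \<or> h2 e = c}) \<le> 2 * card A"
proof -
  have "(\<Sum>c\<in>C. card {e \<in> A. h1 e = c \<or> h2 e = c}) = (\<Sum>e\<in>A. card {c \<in> C. h1 e = c \<or> h2 e = c})"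
    by (rule sum_multicount_gen) (use assms in auto)
  also have "\<dots> \<le> (\<Sum>e\<in>A. 2)"
  proof (rule sum_mono)
    fix e
    have "{c \<in> C. h1 e = c \<or> h2 e = c} \<subseteq> {h1 e, h2 e}" by blast
    hence "card {c \<in> C. h1 e = c \<or> h2 e = c} \<le> card {h1 e, h2 e}" by (rule card_mono[rotated]) simp
    also have "\<dots> \<le> 2" by (simp add: card_insert_if)
    finally show "card {c \<in> C. h1 e = c \<or> h2 e = c} \<le> 2" .
  qed
  finally show ?thesis by simp
qed

lemma simple_graph_finite_edges: "simple_graph V E \<Longrightarrow> finite E"
  unfolding simple_graph_def using finite_subset[of E "Pow V"] by blast

lemma edge_connectivity_le_class_cut:
  assumes "simple_graph V E" "x \<in> V" "y \<in> V" "f y \<noteq> f x"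
  shows "edge_connectivity V E \<le>
    card {e \<in> E. f (end1 e) \<noteq> f (end2 e) \<and> (f (end1 e) = f x \<or> f (end2 e) = f x)}"
proof -
  have "(\<exists>u\<in>e. \<exists>w\<in>e. f u = f x \<and> f w \<noteq> f x) \<longleftrightarrow>
      f (end1 e) \<noteq> f (end2 e) \<and> (f (end1 e) = f x \<or> f (end2 e) = f x)" if "e \<in> E" for e
  proof -
    have "e = {end1 e, end2 e}" using assms(1) that edge_ends(1) unfolding simple_graph_def by blast
    hence "(\<exists>u\<in>e. \<exists>w\<in>e. f u = f x \<and> f w \<noteq> f x) \<longleftrightarrow>
        (\<exists>u\<in>{end1 e, end2 e}. \<exists>w\<in>{end1 e, end2 e}. f u = f x \<and> f w \<noteq> f x)"
      by (rule arg_cong[where f = "\<lambda>S. \<exists>u\<in>S. \<exists>w\<in>S. f u = f x \<and> f w \<noteq> f x"])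
    thus ?thesis by auto
  qed
  hence "{e \<in> E. \<exists>u\<in>e. \<exists>w\<in>e. u \<in> {v. f v = f x} \<and> w \<notin> {v. f v = f x}} =
      {e \<in> E. f (end1 e) \<noteq> f (end2 e) \<and> (f (end1 e) = f x \<or> f (end2 e) = f x)}"
    by auto
  thus ?thesis using edge_connectivity_le_cut[of x V "{v. f v = f x}" y E] assms(2-4) by simp
qed

text \<open>Each class is incident to at least k' crossing edges, and each crossing edge is incident to
  exactly two classes, so r classes are crossed by at least r k' / 2 \<ge> k (r - 1) edges.\<close>

lemma partition_condition_edge_connectivity:
  assumes "simple_graph V E"
  shows "partition_condition V E end1 end2 (edge_connectivity V E div 2)"
  unfolding partition_condition_def
proof
  fix f :: "'a \<Rightarrow> 'a"
  let ?K = "edge_connectivity V E"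
  let ?r = "card (f ` V)"
  let ?Cr = "{e \<in> E. f (end1 e) \<noteq> f (end2 e)}"
  have finV: "finite V" using assms unfolding simple_graph_def by blast
  show "?K div 2 * (?r - 1) \<le> card ?Cr"
  proof (cases "?r \<le> 1")
    case False
    have "?K \<le> card {e \<in> ?Cr. f (end1 e) = c \<or> f (end2 e) = c}" if c: "c \<in> f ` V" for c
    proof -
      obtain x where x: "x \<in> V" "f x = c" using c by blast
      have "\<not> f ` V \<subseteq> {c}" using False card_mono[of "{c}" "f ` V"] by auto
      then obtain y where y: "y \<in> V" "f y \<noteq> f x" using x(2) by blast
      have "?K \<le> card {e \<in> E. f (end1 e) \<noteq> f (end2 e) \<and> (f (end1 e) = f x \<or> f (end2 e) = f x)}"
        by (rule edge_connectivity_le_class_cut[OF assms x(1) y])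
      thus ?thesis using x(2) by simp
    qed
    hence "?r * ?K \<le> (\<Sum>c\<in>f ` V. card {e \<in> ?Cr. f (end1 e) = c \<or> f (end2 e) = c})"
      using sum_mono[of "f ` V" "\<lambda>_. ?K" "\<lambda>c. card {e \<in> ?Cr. f (end1 e) = c \<or> f (end2 e) = c}"] by simp
    also have "\<dots> \<le> 2 * card ?Cr"
      using finV simple_graph_finite_edges[OF assms] by (intro sum_card_incident_le) auto
    finally have "?r * ?K \<le> 2 * card ?Cr" .
    moreover have "?r * (2 * (?K div 2)) \<le> ?r * ?K" by (intro mult_le_mono2) simp
    ultimately have "?r * (2 * (?K div 2)) \<le> 2 * card ?Cr" by (rule le_trans[rotated])
    hence "?K div 2 * ?r \<le> card ?Cr" by (simp add: mult.commute)
    moreover have "?K div 2 * (?r - 1) \<le> ?K div 2 * ?r" by simp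
    ultimately show ?thesis by (rule le_trans[rotated])
  qed simp
qed

lemma simple_graph_ends:
  assumes "simple_graph V E" "e \<in> E"
  shows "end1 e \<in> V" "end2 e \<in> V"
proof -
  have "e \<subseteq> V" "e = {end1 e, end2 e}" using assms edge_ends(1) unfolding simple_graph_def by auto
  thus "end1 e \<in> V" "end2 e \<in> V" by blast+
qed

lemma spanning_packing_connected:
  assumes "simple_graph V E" "V \<noteq> {}" "spanning_packing V E end1 end2 k T" "i < k"
  shows "T i \<subseteq> E" "connected_graph V (T i)"
proof -
  show sub: "T i \<subseteq> E" using assms(3,4) unfolding spanning_packing_def by blast
  have card2: "\<forall>e\<in>T i. card e = 2" using sub assms(1) unfolding simple_graph_def by blast
  have "(x, y) \<in> (adj (T i))\<^sup>*" if "x \<in> V" "y \<in> V" for x y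
  proof -
    have "linked end1 end2 (T i) x y" using assms(3,4) that unfolding spanning_packing_def by blast
    thus ?thesis using linked_ends_iff[OF card2] by simp
  qed
  thus "connected_graph V (T i)" using assms(2) unfolding connected_graph_def by blast
qed

lemma connected_graph_mono:
  assumes "connected_graph V A" "A \<subseteq> B"
  shows "connected_graph V B"
proof -
  have "adj A \<subseteq> adj B" using assms(2) unfolding adj_def by blast
  thus ?thesis using assms(1) rtrancl_mono unfolding connected_graph_def by blast
qed

lemma connected_graph_edges_nonempty:
  assumes "connected_graph V A" "2 \<le> card V"
  shows "A \<noteq> {}"
proof
  assume "A = {}"
  have "finite V" using assms(2) card.infinite by force
  hence "\<exists>x\<in>V. \<exists>y\<in>V. x \<noteq> y" using assms(2) card_le_Suc0_iff_eq[of V] by simp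
  then obtain x y where "x \<in> V" "y \<in> V" "x \<noteq> y" by blast
  moreover have "adj A = {}" using \<open>A = {}\<close> unfolding adj_def by simp
  ultimately show False using assms(1) unfolding connected_graph_def by auto
qed

lemma sym_diff_commute: "sym_diff A B = sym_diff B A"
  unfolding sym_diff_def by blast

lemma subset_sym_diff_unions:
  assumes "\<forall>i<k. \<forall>j<k. i \<noteq> j \<longrightarrow> T i \<inter> T j = {}" "S1 \<subseteq> {..<k}" "S2 \<subseteq> {..<k}" "i \<in> S1" "i \<notin> S2"
  shows "T i \<subseteq> sym_diff (\<Union>j\<in>S1. T j) (\<Union>j\<in>S2. T j)"
proof -
  have "T i \<inter> T j = {}" if "j \<in> S2" for j using assms that by blast
  thus ?thesis using assms(4) unfolding sym_diff_def by blast
qed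

lemma connectivity_code_unions:
  assumes "\<forall>i<k. T i \<subseteq> E \<and> connected_graph V (T i)" "\<forall>i<k. \<forall>j<k. i \<noteq> j \<longrightarrow> T i \<inter> T j = {}"
  shows "connectivity_code V E ((\<lambda>S. \<Union>i\<in>S. T i) ` Pow {..<k})"
  unfolding connectivity_code_def
proof (intro conjI ballI impI)
  fix F assume "F \<in> (\<lambda>S. \<Union>i\<in>S. T i) ` Pow {..<k}"
  thus "F \<subseteq> E" using assms(1) by blast
next
  fix F1 F2 assume F: "F1 \<in> (\<lambda>S. \<Union>i\<in>S. T i) ` Pow {..<k}" "F2 \<in> (\<lambda>S. \<Union>i\<in>S. T i) ` Pow {..<k}"
    "F1 \<noteq> F2"
  obtain S1 where S1: "S1 \<subseteq> {..<k}" "F1 = (\<Union>i\<in>S1. T i)" using F(1) by blast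
  obtain S2 where S2: "S2 \<subseteq> {..<k}" "F2 = (\<Union>i\<in>S2. T i)" using F(2) by blast
  have "S1 \<noteq> S2" using F(3) S1(2) S2(2) by blast
  then obtain i where "i \<in> S1 - S2 \<or> i \<in> S2 - S1" by blast
  hence "i < k \<and> T i \<subseteq> sym_diff F1 F2"
  proof
    assume "i \<in> S1 - S2"
    thus ?thesis using subset_sym_diff_unions[OF assms(2) S1(1) S2(1), of i] S1 S2 by auto
  next
    assume "i \<in> S2 - S1"
    thus ?thesis
      using subset_sym_diff_unions[OF assms(2) S2(1) S1(1), of i] S1 S2 sym_diff_commute[of F1 F2] by auto
  qed
  thus "connected_graph V (sym_diff F1 F2)" using assms(1) connected_graph_mono by blast
qed

lemma card_unions_disjoint_nonempty:
  assumes "\<forall>i<k. T i \<noteq> {}" "\<forall>i<k. \<forall>j<k. i \<noteq> j \<longrightarrow> T i \<inter> T j = {}"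
  shows "card ((\<lambda>S. \<Union>i\<in>S. T i) ` Pow {..<k}) = 2 ^ k"
proof -
  have "inj_on (\<lambda>S. \<Union>i\<in>S. T i) (Pow {..<k})"
  proof (rule inj_onI, rule ccontr)
    fix S1 S2 assume S: "S1 \<in> Pow {..<k}" "S2 \<in> Pow {..<k}" "(\<Union>i\<in>S1. T i) = (\<Union>i\<in>S2. T i)" "S1 \<noteq> S2"
    then obtain i where "i \<in> S1 \<and> i \<notin> S2 \<or> i \<in> S2 \<and> i \<notin> S1" by blast
    hence "i < k" "T i \<subseteq> {}"
      using subset_sym_diff_unions[OF assms(2), of S1 S2] subset_sym_diff_unions[OF assms(2), of S2 S1] S
      unfolding sym_diff_def by auto
    thus False using assms(1) by blast
  qed
  thus ?thesis by (simp add: card_image card_Pow)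
qed

lemma card_le_max_code:
  assumes "finite E" "connectivity_code V E C"
  shows "card C \<le> max_code V E"
proof -
  have "{card C | C. connectivity_code V E C} \<subseteq> {..card (Pow E)}"
  proof
    fix n assume "n \<in> {card C | C. connectivity_code V E C}"
    then obtain C' where C': "n = card C'" "connectivity_code V E C'" by blast
    have "C' \<subseteq> Pow E" using C'(2) unfolding connectivity_code_def by blast
    thus "n \<in> {..card (Pow E)}" using C'(1) assms(1) by (simp add: card_mono)
  qed
  hence "finite {card C | C. connectivity_code V E C}" using finite_subset by blast
  thus ?thesis unfolding max_code_def using assms(2) by (blast intro: Max_ge)
qed

theorem mainTheorem10:
  fixes V :: "'a set" and E :: "'a set set"
  assumes "simple_graph V E"
    and "connected_graph V E"
    and "card V \<ge> 2"
  shows "max_code V E \<ge> 2 ^ (edge_connectivity V E div 2)"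
proof -
  let ?k = "edge_connectivity V E div 2"
  have finV: "finite V" using assms(1) unfolding simple_graph_def by blast
  have finE: "finite E" using simple_graph_finite_edges[OF assms(1)] .
  obtain T where T: "spanning_packing V E end1 end2 ?k T"
    using tree_packing[OF finV finE _ partition_condition_edge_connectivity[OF assms(1)]]
      simple_graph_ends[OF assms(1)] by blast
  have "V \<noteq> {}" using assms(3) by auto
  hence trees: "\<forall>i<?k. T i \<subseteq> E \<and> connected_graph V (T i)"
    using spanning_packing_connected[OF assms(1) _ T] by blast
  have disjoint: "\<forall>i<?k. \<forall>j<?k. i \<noteq> j \<longrightarrow> T i \<inter> T j = {}"
    using T unfolding spanning_packing_def by blast
  have "card ((\<lambda>S. \<Union>i\<in>S. T i) ` Pow {..<?k}) = 2 ^ ?k"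
    using card_unions_disjoint_nonempty[OF _ disjoint] connected_graph_edges_nonempty assms(3) trees by blast
  thus ?thesis using card_le_max_code[OF finE connectivity_code_unions[OF trees disjoint]] by simp
qed

end
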